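(* Let $T$ be a finite rooted tree in which every inner node has at least two children, with node set $V$ and leaf set $L$. Let $S\subseteq V\setminus L$ and let $(\pi,\sigma)$ be a pair of injective maps $S\to L$ identifying $S$ with unique request, and put $A=\pi(S)$, $B=\sigma(S)$. Then for each inner node $x$ exactly one of the following three cases holds: (1) $x\notin S$, $x$ is not requested in $(\pi,\sigma)$, and for each child $c$ of $x$, $|A\cap V(T_c)|=|B\cap V(T_c)|$; (2) $x\notin S$, $x$ is requested in $(\pi,\sigma)$, and there is a leaf $z\in(A\cup B)\cap V(T_x)$ such that for each child $c$ of $x$, $|(A\setminus\{z\})\cap V(T_c)|=|(B\setminus\{z\})\cap V(T_c)|$; (3) $x\in S$, $x$ is requested in $(\pi,\sigma)$, and there are leaves $a\in A\cap V(T_x)$ and $b\in B\cap V(T_x)$ such that for each child $c$ of $x$, $|(A\setminus\{a\})\cap V(T_c)|=|(B\setminus\{b\})\cap V(T_c)|$ and $\{a,b\}\not\subseteq V(T_c)$. In particular, $x\in S$ if and only if there exist $a\in A\cap V(T_x)$ and $b\in B\cap V(T_x)$ such that for each child $c$ of $x$, $|(A\setminus\{a\})\cap V(T_c)|=|(B\setminus\{b\})\cap V(T_c)|$ and $\{a,b\}\not\subseteq V(T_c)$.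
   Context: Every node is its own ancestor and descendant; $T_x$ is the subtree rooted at $x$ and $V(T_x)$ the set of descendants of $x$. A pair $(\pi,\sigma)$ of injective maps from $S\subseteq V\setminus L$ to $L$ identifies $S$ if for each $s\in S$, $s$ is the least common ancestor of $\pi(s)$ and $\sigma(s)$. For $s\in S$, a node $x$ is $s$-requested in $(\pi,\sigma)$ if $x$ lies on the path of $T$ from $\pi(s)$ to $\sigma(s)$; it is requested if it is $s$-requested for some $s\in S$. The pair has unique request if every node is $s$-requested for at most one $s\in S$. *)

theory Defs
  imports Main
begin

definition rooted_tree :: "'a set \<Rightarrow> 'a \<Rightarrow> ('a \<times> 'a) set \<Rightarrow> bool" where
  "rooted_tree V r E \<longleftrightarrow> finite V \<and> r \<in> V \<and> E \<subseteq> V \<times> V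
     \<and> (\<forall>p. (p, r) \<notin> E)
     \<and> (\<forall>v\<in>V. v \<noteq> r \<longrightarrow> (\<exists>!p. (p, v) \<in> E))
     \<and> (\<forall>v\<in>V. (r, v) \<in> E\<^sup>*)"

definition children :: "('a \<times> 'a) set \<Rightarrow> 'a \<Rightarrow> 'a set" where
  "children E x = {c. (x, c) \<in> E}"

definition leaves :: "'a set \<Rightarrow> ('a \<times> 'a) set \<Rightarrow> 'a set" where
  "leaves V E = {v \<in> V. children E v = {}}"

text \<open>Every node is its own ancestor/descendant: x is an ancestor of y iff (x,y) in E^*.
  desc E x is V(T_x), the set of descendants of x.\<close>
definition desc :: "('a \<times> 'a) set \<Rightarrow> 'a \<Rightarrow> 'a set" where
  "desc E x = {y. (x, y) \<in> E\<^sup>*}"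

definition is_lca :: "('a \<times> 'a) set \<Rightarrow> 'a \<Rightarrow> 'a \<Rightarrow> 'a \<Rightarrow> bool" where
  "is_lca E s u w \<longleftrightarrow> (s, u) \<in> E\<^sup>* \<and> (s, w) \<in> E\<^sup>*
     \<and> (\<forall>t. (t, u) \<in> E\<^sup>* \<and> (t, w) \<in> E\<^sup>* \<longrightarrow> (t, s) \<in> E\<^sup>*)"

definition on_path :: "('a \<times> 'a) set \<Rightarrow> 'a \<Rightarrow> 'a \<Rightarrow> 'a \<Rightarrow> bool" where
  "on_path E u w x \<longleftrightarrow> (\<exists>s. is_lca E s u w \<and> (s, x) \<in> E\<^sup>*
     \<and> ((x, u) \<in> E\<^sup>* \<or> (x, w) \<in> E\<^sup>*))"

definition identifies ::
  "'a set \<Rightarrow> ('a \<times> 'a) set \<Rightarrow> 'a set \<Rightarrow> ('a \<Rightarrow> 'a) \<Rightarrow> ('a \<Rightarrow> 'a) \<Rightarrow> bool" where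
  "identifies V E S \<pi> \<sigma> \<longleftrightarrow> S \<subseteq> V - leaves V E
     \<and> inj_on \<pi> S \<and> inj_on \<sigma> S
     \<and> \<pi> ` S \<subseteq> leaves V E \<and> \<sigma> ` S \<subseteq> leaves V E
     \<and> (\<forall>s\<in>S. is_lca E s (\<pi> s) (\<sigma> s))"

definition s_requested :: "('a \<times> 'a) set \<Rightarrow> ('a \<Rightarrow> 'a) \<Rightarrow> ('a \<Rightarrow> 'a) \<Rightarrow> 'a \<Rightarrow> 'a \<Rightarrow> bool" where
  "s_requested E \<pi> \<sigma> s x \<longleftrightarrow> on_path E (\<pi> s) (\<sigma> s) x"

definition requested :: "('a \<times> 'a) set \<Rightarrow> 'a set \<Rightarrow> ('a \<Rightarrow> 'a) \<Rightarrow> ('a \<Rightarrow> 'a) \<Rightarrow> 'a \<Rightarrow> bool" where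
  "requested E S \<pi> \<sigma> x \<longleftrightarrow> (\<exists>s\<in>S. s_requested E \<pi> \<sigma> s x)"

definition unique_request :: "'a set \<Rightarrow> ('a \<times> 'a) set \<Rightarrow> 'a set \<Rightarrow> ('a \<Rightarrow> 'a) \<Rightarrow> ('a \<Rightarrow> 'a) \<Rightarrow> bool" where
  "unique_request V E S \<pi> \<sigma> \<longleftrightarrow> (\<forall>x\<in>V. \<forall>s\<in>S. \<forall>t\<in>S.
     s_requested E \<pi> \<sigma> s x \<and> s_requested E \<pi> \<sigma> t x \<longrightarrow> s = t)"

end

(*
  A pair (\<pi> s, \<sigma> s) that is not s-requested at x cannot be separated by a child
  subtree of x, since such a subtree would put x on the path between them.  Hence all pairs
  except the (by unique request, at most one) pair requesting x contribute equally to A and B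
  in every child subtree, and that pair decides the case: there is none (case 1), or its lca
  lies strictly above x and exactly one endpoint z lies below x (case 2), or it is x's own
  pair, whose endpoints lie in different child subtrees (case 3).

  Conversely, if removing a \<in> A and b \<in> B from different child subtrees T_c0 and T_c1 balances
  every child, then T_c0 holds one more leaf of A than of B.  In case 1 no child is
  unbalanced, and in case 2 removing the single leaf z leaves T_c0 or T_c1 untouched, so one
  of them is balanced; thus x \<in> S.
*)

theory Submission
  imports Defs
begin

lemma card_image_Int_eq:
  assumes "inj_on f T" "inj_on g T" "\<And>s. s \<in> T \<Longrightarrow> f s \<in> D \<longleftrightarrow> g s \<in> D"
  shows "card (f ` T \<inter> D) = card (g ` T \<inter> D)"
proof -
  let ?T' = "{s \<in> T. f s \<in> D}"
  have "f ` T \<inter> D = f ` ?T'" "g ` T \<inter> D = g ` ?T'"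
    using assms(3) by auto
  moreover have "inj_on f ?T'" "inj_on g ?T'"
    using assms(1,2) by (auto intro: inj_on_subset)
  ultimately show ?thesis
    by (simp add: card_image)
qed

lemma card_Diff_Int_neq:
  assumes "finite A" "a \<in> A \<inter> D" "b \<notin> D" "card (A \<inter> D) = card (B \<inter> D)"
  shows "card ((A - {a}) \<inter> D) \<noteq> card ((B - {b}) \<inter> D)"
proof -
  have "(A - {a}) \<inter> D = (A \<inter> D) - {a}" "(B - {b}) \<inter> D = B \<inter> D"
    using assms(3) by auto
  moreover have "card (A \<inter> D) > 0"
    using assms(1,2) by (auto simp: card_gt_0_iff)
  ultimately show ?thesis
    using assms by (simp add: card_Diff_singleton_if)
qed

lemma card_image_Diff_Int_eq:
  assumes "inj_on f S" "s0 \<in> S" "f s0 \<notin> g ` S" "g s0 \<notin> D"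
    and "card (f ` (S - {s0}) \<inter> D) = card (g ` (S - {s0}) \<inter> D)"
  shows "card ((f ` S - {f s0}) \<inter> D) = card ((g ` S - {f s0}) \<inter> D)"
proof -
  have "f ` S - {f s0} = f ` (S - {s0})"
    using inj_on_image_set_diff[OF assms(1), of S "{s0}"] assms(2) by simp
  moreover have "(g ` S - {f s0}) \<inter> D = g ` (S - {s0}) \<inter> D"
    using assms(3,4) by auto
  ultimately show ?thesis
    using assms(5) by simp
qed

lemma desc_child_cases:
  assumes "y \<in> desc E x" "y \<noteq> x"
  obtains c where "c \<in> children E x" "y \<in> desc E c"
  using assms unfolding desc_def children_def
  by (auto elim: converse_rtranclE)

locale tree =
  fixes V :: "'a set" and r :: 'a and E :: "('a \<times> 'a) set"
  assumes rooted_tree: "rooted_tree V r E"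
begin

lemma finite_V: "finite V"
  and edges_subset: "E \<subseteq> V \<times> V"
  and root_no_parent: "(p, r) \<notin> E"
  and unique_parent_ex: "v \<in> V \<Longrightarrow> v \<noteq> r \<Longrightarrow> \<exists>!p. (p, v) \<in> E"
  and reachable_from_root: "v \<in> V \<Longrightarrow> (r, v) \<in> E\<^sup>*"
  using rooted_tree unfolding rooted_tree_def by auto

lemma parent_unique: "(p, v) \<in> E \<Longrightarrow> (q, v) \<in> E \<Longrightarrow> p = q"
proof -
  assume "(p, v) \<in> E" "(q, v) \<in> E"
  moreover from this have "v \<in> V" "v \<noteq> r"
    using edges_subset root_no_parent by auto
  ultimately show "p = q"
    using unique_parent_ex by blast
qed

lemma desc_closed: "(u, v) \<in> E\<^sup>* \<Longrightarrow> u \<in> V \<Longrightarrow> v \<in> V"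
  by (induction rule: rtrancl_induct) (use edges_subset in auto)

lemma no_cycle_below_root: "(r, y) \<in> E\<^sup>* \<Longrightarrow> (y, y) \<notin> E\<^sup>+"
proof (induction rule: rtrancl_induct)
  case base
  show ?case
    using root_no_parent tranclD2 by metis
next
  case (step y z)
  show ?case
  proof
    assume "(z, z) \<in> E\<^sup>+"
    then obtain p where zp: "(z, p) \<in> E\<^sup>*" and pz: "(p, z) \<in> E"
      using tranclD2 by metis
    have "p = y"
      using parent_unique[OF pz step.hyps(2)] .
    then show False
      using rtrancl_into_trancl2[OF step.hyps(2) zp] step.IH by simp
  qed
qed

lemma no_cycle: "(y, y) \<notin> E\<^sup>+"
proof
  assume cyc: "(y, y) \<in> E\<^sup>+"
  then have "y \<in> V"
    using edges_subset by (auto dest: tranclD)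
  then show False
    using no_cycle_below_root[OF reachable_from_root] cyc by blast
qed

lemma anc_antisym: "(x, y) \<in> E\<^sup>* \<Longrightarrow> (y, x) \<in> E\<^sup>* \<Longrightarrow> x = y"
  by (metis no_cycle rtrancl_eq_or_trancl rtrancl_trancl_trancl)

lemma anc_linear: "(a, v) \<in> E\<^sup>* \<Longrightarrow> (b, v) \<in> E\<^sup>* \<Longrightarrow> (a, b) \<in> E\<^sup>* \<or> (b, a) \<in> E\<^sup>*"
proof (induction arbitrary: b rule: rtrancl_induct)
  case base
  then show ?case by simp
next
  case (step y z)
  note ay = step.hyps(1) and yz = step.hyps(2) and IH = step.IH
  from step.prems show ?case
  proof (cases rule: rtranclE)
    case base
    then show ?thesis
      using rtrancl_into_rtrancl[OF ay yz] by simp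
  next
    case (step p)
    then have "p = y"
      using parent_unique yz by blast
    then show ?thesis
      using IH step(1) by blast
  qed
qed

lemma child_not_anc: "(x, c) \<in> E \<Longrightarrow> (c, x) \<notin> E\<^sup>*"
  using no_cycle[of x] rtrancl_into_trancl2[of x c E x] by blast

lemma anc_of_child:
  assumes "(s, c) \<in> E\<^sup>*" "s \<noteq> c" "(x, c) \<in> E"
  shows "(s, x) \<in> E\<^sup>*"
proof -
  obtain p where "(s, p) \<in> E\<^sup>*" "(p, c) \<in> E"
    using assms(1,2) by (cases rule: rtranclE) auto
  then show ?thesis
    using parent_unique assms(3) by blast
qed

lemma desc_children_disjoint:
  assumes "c0 \<in> children E x" "c1 \<in> children E x" "c0 \<noteq> c1"
  shows "desc E c0 \<inter> desc E c1 = {}"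
proof -
  have e0: "(x, c0) \<in> E" and e1: "(x, c1) \<in> E"
    using assms(1,2) unfolding children_def by auto
  have False if "(c0, y) \<in> E\<^sup>*" "(c1, y) \<in> E\<^sup>*" for y
    using anc_linear[OF that]
  proof
    assume "(c0, c1) \<in> E\<^sup>*"
    then show False
      using anc_of_child[OF _ assms(3) e1] child_not_anc[OF e0] by blast
  next
    assume "(c1, c0) \<in> E\<^sup>*"
    then show False
      using anc_of_child[OF _ assms(3)[symmetric] e0] child_not_anc[OF e1] by blast
  qed
  then show ?thesis
    unfolding desc_def by blast
qed

lemma desc_child_subset: "c \<in> children E x \<Longrightarrow> desc E c \<subseteq> desc E x"
  unfolding children_def desc_def by (auto intro: converse_rtrancl_into_rtrancl)

lemma is_lca_commute: "is_lca E s u w \<longleftrightarrow> is_lca E s w u"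
  unfolding is_lca_def by blast

lemma lca_unique: "is_lca E s u w \<Longrightarrow> is_lca E s' u w \<Longrightarrow> s = s'"
  unfolding is_lca_def using anc_antisym by blast

lemma on_path_iff:
  "is_lca E s u w \<Longrightarrow> on_path E u w x \<longleftrightarrow> (s, x) \<in> E\<^sup>* \<and> ((x, u) \<in> E\<^sup>* \<or> (x, w) \<in> E\<^sup>*)"
  unfolding on_path_def using lca_unique by blast

lemma on_path_if_separated:
  assumes lca: "is_lca E s u w" and c: "c \<in> children E x"
    and "u \<in> desc E c" "w \<notin> desc E c"
  shows "on_path E u w x"
proof -
  have su: "(s, u) \<in> E\<^sup>*" "(s, w) \<in> E\<^sup>*" and cu: "(c, u) \<in> E\<^sup>*" and cw: "(c, w) \<notin> E\<^sup>*"
    using assms unfolding is_lca_def desc_def by auto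
  have "(c, s) \<notin> E\<^sup>*"
    using cw su(2) rtrancl_trans by metis
  then have "(s, c) \<in> E\<^sup>*" "s \<noteq> c"
    using anc_linear[OF su(1) cu] by auto
  then have "(s, x) \<in> E\<^sup>*"
    using anc_of_child c unfolding children_def by blast
  moreover have "(x, u) \<in> E\<^sup>*"
    using c cu unfolding children_def by (auto intro: converse_rtrancl_into_rtrancl)
  ultimately show ?thesis
    unfolding on_path_def using lca by blast
qed

end

locale identification = tree +
  fixes S :: "'a set" and \<pi> \<sigma> :: "'a \<Rightarrow> 'a"
  assumes identifies: "identifies V E S \<pi> \<sigma>"
    and unique_request: "unique_request V E S \<pi> \<sigma>"
begin

lemma S_inner: "S \<subseteq> V - leaves V E"
  and inj_\<pi>: "inj_on \<pi> S" and inj_\<sigma>: "inj_on \<sigma> S"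
  and \<pi>_leaf: "s \<in> S \<Longrightarrow> \<pi> s \<in> leaves V E"
  and \<sigma>_leaf: "s \<in> S \<Longrightarrow> \<sigma> s \<in> leaves V E"
  and lca: "s \<in> S \<Longrightarrow> is_lca E s (\<pi> s) (\<sigma> s)"
  using identifies unfolding identifies_def by auto

lemma finite_images: "finite (\<pi> ` S)" "finite (\<sigma> ` S)"
  using S_inner finite_V by (auto intro: finite_subset)

lemma anc_endpoints: "s \<in> S \<Longrightarrow> (s, \<pi> s) \<in> E\<^sup>*" "s \<in> S \<Longrightarrow> (s, \<sigma> s) \<in> E\<^sup>*"
  using lca unfolding is_lca_def by auto

lemma s_requested_iff:
  "s \<in> S \<Longrightarrow> s_requested E \<pi> \<sigma> s y \<longleftrightarrow> (s, y) \<in> E\<^sup>* \<and> ((y, \<pi> s) \<in> E\<^sup>* \<or> (y, \<sigma> s) \<in> E\<^sup>*)"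
  unfolding s_requested_def using on_path_iff[OF lca] .

lemma s_requested_self: "s \<in> S \<Longrightarrow> s_requested E \<pi> \<sigma> s s"
  using s_requested_iff anc_endpoints by simp

lemma s_requested_unique:
  assumes "s \<in> S" "t \<in> S" "s_requested E \<pi> \<sigma> s y" "s_requested E \<pi> \<sigma> t y"
  shows "s = t"
proof -
  have "y \<in> V"
    using desc_closed S_inner s_requested_iff assms(1,3) by blast
  then show ?thesis
    using unique_request assms unfolding unique_request_def by blast
qed

lemma endpoints_distinct:
  assumes "s \<in> S" "t \<in> S"
  shows "\<pi> s \<noteq> \<sigma> t"
proof
  assume eq: "\<pi> s = \<sigma> t"
  have "s_requested E \<pi> \<sigma> s (\<pi> s)"
    using assms(1) s_requested_iff anc_endpoints by simp
  moreover have "s_requested E \<pi> \<sigma> t (\<pi> s)"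
    unfolding eq using assms(2) s_requested_iff anc_endpoints by simp
  ultimately have "\<pi> s = \<sigma> s"
    using s_requested_unique assms eq by blast
  then have "(\<pi> s, s) \<in> E\<^sup>*"
    using lca[OF assms(1)] unfolding is_lca_def by auto
  then have "\<pi> s = s"
    using anc_antisym anc_endpoints assms(1) by blast
  then show False
    using \<pi>_leaf[OF assms(1)] S_inner assms(1) by auto
qed

lemma s_requested_if_separated:
  assumes "s \<in> S" "c \<in> children E x" "\<pi> s \<in> desc E c \<longleftrightarrow> \<sigma> s \<notin> desc E c"
  shows "s_requested E \<pi> \<sigma> s x"
proof (cases "\<pi> s \<in> desc E c")
  case True
  then show ?thesis
    unfolding s_requested_def using on_path_if_separated[OF lca] assms by blast
next
  case False
  then have "on_path E (\<sigma> s) (\<pi> s) x"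
    using on_path_if_separated lca is_lca_commute assms by blast
  then show ?thesis
    unfolding s_requested_def on_path_def using is_lca_commute by blast
qed

lemma card_children_balanced:
  assumes "T \<subseteq> S" "c \<in> children E x" "\<And>s. s \<in> T \<Longrightarrow> \<not> s_requested E \<pi> \<sigma> s x"
  shows "card (\<pi> ` T \<inter> desc E c) = card (\<sigma> ` T \<inter> desc E c)"
proof (rule card_image_Int_eq)
  show "inj_on \<pi> T" "inj_on \<sigma> T"
    using assms(1) inj_\<pi> inj_\<sigma> by (auto intro: inj_on_subset)
  show "\<pi> s \<in> desc E c \<longleftrightarrow> \<sigma> s \<in> desc E c" if "s \<in> T" for s
    using s_requested_if_separated[OF _ assms(2)] assms(1,3) that by blast
qed

lemma card_children_balanced_except:
  assumes "s0 \<in> S" "s_requested E \<pi> \<sigma> s0 x" "c \<in> children E x"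
  shows "card (\<pi> ` (S - {s0}) \<inter> desc E c) = card (\<sigma> ` (S - {s0}) \<inter> desc E c)"
  using card_children_balanced[OF _ assms(3)] s_requested_unique assms(1,2) by blast

lemma balanced_if_not_requested:
  assumes "\<not> requested E S \<pi> \<sigma> x" "c \<in> children E x"
  shows "card (\<pi> ` S \<inter> desc E c) = card (\<sigma> ` S \<inter> desc E c)"
  using card_children_balanced[OF _ assms(2)] assms(1) unfolding requested_def by blast

lemma balanced_removing_own_pair:
  assumes "x \<in> S" "c \<in> children E x"
  shows "card ((\<pi> ` S - {\<pi> x}) \<inter> desc E c) = card ((\<sigma> ` S - {\<sigma> x}) \<inter> desc E c)"
    and "\<not> {\<pi> x, \<sigma> x} \<subseteq> desc E c"
proof -
  have "\<pi> ` S - {\<pi> x} = \<pi> ` (S - {x})" "\<sigma> ` S - {\<sigma> x} = \<sigma> ` (S - {x})"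
    using inj_on_image_set_diff[OF inj_\<pi>, of S "{x}"] inj_on_image_set_diff[OF inj_\<sigma>, of S "{x}"]
      assms(1) by auto
  then show "card ((\<pi> ` S - {\<pi> x}) \<inter> desc E c) = card ((\<sigma> ` S - {\<sigma> x}) \<inter> desc E c)"
    using card_children_balanced_except[OF assms(1) s_requested_self[OF assms(1)] assms(2)] by simp
  show "\<not> {\<pi> x, \<sigma> x} \<subseteq> desc E c"
  proof
    assume "{\<pi> x, \<sigma> x} \<subseteq> desc E c"
    then have "(c, x) \<in> E\<^sup>*"
      using lca[OF assms(1)] unfolding is_lca_def desc_def by auto
    then show False
      using child_not_anc assms(2) unfolding children_def by blast
  qed
qed

lemma pair_witness_if_in_S:
  assumes "x \<in> S"
  shows "\<exists>a \<in> \<pi> ` S \<inter> desc E x. \<exists>b \<in> \<sigma> ` S \<inter> desc E x. a \<in> leaves V E \<and> b \<in> leaves V E \<and>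
           (\<forall>c \<in> children E x. card ((\<pi> ` S - {a}) \<inter> desc E c) = card ((\<sigma> ` S - {b}) \<inter> desc E c)
              \<and> \<not> {a, b} \<subseteq> desc E c)"
proof -
  have "\<pi> x \<in> \<pi> ` S \<inter> desc E x" "\<sigma> x \<in> \<sigma> ` S \<inter> desc E x"
    using assms anc_endpoints unfolding desc_def by auto
  then show ?thesis
    using balanced_removing_own_pair[OF assms] \<pi>_leaf[OF assms] \<sigma>_leaf[OF assms] by blast
qed

lemma single_witness_if_requested:
  assumes "x \<notin> S" "requested E S \<pi> \<sigma> x"
  shows "\<exists>z \<in> (\<pi> ` S \<union> \<sigma> ` S) \<inter> desc E x. z \<in> leaves V E \<and>
           (\<forall>c \<in> children E x. card ((\<pi> ` S - {z}) \<inter> desc E c) = card ((\<sigma> ` S - {z}) \<inter> desc E c))"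
proof -
  obtain s0 where s0: "s0 \<in> S" "s_requested E \<pi> \<sigma> s0 x"
    using assms(2) unfolding requested_def by blast
  have s0x: "(s0, x) \<in> E\<^sup>*" and x_anc: "(x, \<pi> s0) \<in> E\<^sup>* \<or> (x, \<sigma> s0) \<in> E\<^sup>*"
    using s0 s_requested_iff by auto
  have not_both: "\<not> ((x, \<pi> s0) \<in> E\<^sup>* \<and> (x, \<sigma> s0) \<in> E\<^sup>*)"
  proof
    assume "(x, \<pi> s0) \<in> E\<^sup>* \<and> (x, \<sigma> s0) \<in> E\<^sup>*"
    then have "(x, s0) \<in> E\<^sup>*"
      using lca[OF s0(1)] unfolding is_lca_def by blast
    then show False
      using anc_antisym s0x s0(1) assms(1) by blast
  qed
  have outside: "y \<notin> desc E c" if "(x, y) \<notin> E\<^sup>*" "c \<in> children E x" for y c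
    using desc_child_subset[OF that(2)] that(1) unfolding desc_def by blast
  have distinct: "\<pi> s0 \<notin> \<sigma> ` S" "\<sigma> s0 \<notin> \<pi> ` S"
    using endpoints_distinct s0(1) by (auto dest: sym)
  note others = card_children_balanced_except[OF s0]
  from x_anc show ?thesis
  proof
    assume x\<pi>: "(x, \<pi> s0) \<in> E\<^sup>*"
    then have "(x, \<sigma> s0) \<notin> E\<^sup>*"
      using not_both by blast
    then have "card ((\<pi> ` S - {\<pi> s0}) \<inter> desc E c) = card ((\<sigma> ` S - {\<pi> s0}) \<inter> desc E c)"
      if "c \<in> children E x" for c
      using card_image_Diff_Int_eq[OF inj_\<pi> s0(1) distinct(1) outside others] that by blast
    moreover have "\<pi> s0 \<in> (\<pi> ` S \<union> \<sigma> ` S) \<inter> desc E x"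
      using x\<pi> s0(1) unfolding desc_def by simp
    ultimately show ?thesis
      using \<pi>_leaf[OF s0(1)] by blast
  next
    assume x\<sigma>: "(x, \<sigma> s0) \<in> E\<^sup>*"
    then have "(x, \<pi> s0) \<notin> E\<^sup>*"
      using not_both by blast
    then have "card ((\<pi> ` S - {\<sigma> s0}) \<inter> desc E c) = card ((\<sigma> ` S - {\<sigma> s0}) \<inter> desc E c)"
      if "c \<in> children E x" for c
      using card_image_Diff_Int_eq[OF inj_\<sigma> s0(1) distinct(2) outside others[symmetric]] that
      by (metis (no_types))
    moreover have "\<sigma> s0 \<in> (\<pi> ` S \<union> \<sigma> ` S) \<inter> desc E x"
      using x\<sigma> s0(1) unfolding desc_def by simp
    ultimately show ?thesis
      using \<sigma>_leaf[OF s0(1)] by blast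
  qed
qed

lemma in_S_if_pair_balanced:
  assumes "x \<notin> leaves V E" "a \<in> \<pi> ` S \<inter> desc E x" "b \<in> \<sigma> ` S \<inter> desc E x"
    and pair: "\<And>c. c \<in> children E x \<Longrightarrow>
      card ((\<pi> ` S - {a}) \<inter> desc E c) = card ((\<sigma> ` S - {b}) \<inter> desc E c) \<and> \<not> {a, b} \<subseteq> desc E c"
  shows "x \<in> S"
proof (rule ccontr)
  assume x_notin: "x \<notin> S"
  have a: "a \<in> \<pi> ` S" "a \<in> desc E x" and b: "b \<in> \<sigma> ` S" "b \<in> desc E x"
    using assms(2,3) by auto
  have "a \<noteq> x" "b \<noteq> x"
    using a(1) b(1) assms(1) \<pi>_leaf \<sigma>_leaf by auto
  then obtain c0 c1 where c0: "c0 \<in> children E x" "a \<in> desc E c0"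
    and c1: "c1 \<in> children E x" "b \<in> desc E c1"
    using desc_child_cases a(2) b(2) by metis
  have b_out: "b \<notin> desc E c0" and a_out: "a \<notin> desc E c1"
    using pair[OF c0(1)] pair[OF c1(1)] c0(2) c1(2) by auto
  have disjoint: "desc E c0 \<inter> desc E c1 = {}"
    using desc_children_disjoint[OF c0(1) c1(1)] b_out c1(2) by blast
  obtain c where c: "c \<in> {c0, c1}"
    and balanced: "card (\<pi> ` S \<inter> desc E c) = card (\<sigma> ` S \<inter> desc E c)"
  proof (cases "requested E S \<pi> \<sigma> x")
    case False
    then show ?thesis
      using that balanced_if_not_requested c0(1) by blast
  next
    case True
    then obtain z where z: "\<And>c. c \<in> children E x \<Longrightarrow>
        card ((\<pi> ` S - {z}) \<inter> desc E c) = card ((\<sigma> ` S - {z}) \<inter> desc E c)"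
      using single_witness_if_requested x_notin by blast
    obtain c where c: "c \<in> {c0, c1}" "z \<notin> desc E c"
      using disjoint by blast
    then have "(\<pi> ` S - {z}) \<inter> desc E c = \<pi> ` S \<inter> desc E c"
      "(\<sigma> ` S - {z}) \<inter> desc E c = \<sigma> ` S \<inter> desc E c"
      by auto
    moreover have "c \<in> children E x"
      using c(1) c0(1) c1(1) by blast
    ultimately show ?thesis
      using that[OF c(1)] z[of c] by simp
  qed
  show False
  proof (cases "c = c0")
    case True
    then have "card ((\<pi> ` S - {a}) \<inter> desc E c0) \<noteq> card ((\<sigma> ` S - {b}) \<inter> desc E c0)"
      using card_Diff_Int_neq[OF finite_images(1), of a "desc E c0" b "\<sigma> ` S"] a(1) c0(2) b_out
        balanced by auto
    then show False
      using pair[OF c0(1)] by blast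
  next
    case False
    then have "c = c1"
      using c by blast
    then have "card ((\<sigma> ` S - {b}) \<inter> desc E c1) \<noteq> card ((\<pi> ` S - {a}) \<inter> desc E c1)"
      using card_Diff_Int_neq[OF finite_images(2), of b "desc E c1" a "\<pi> ` S"] b(1) c1(2) a_out
        balanced by auto
    then show False
      using pair[OF c1(1)] by metis
  qed
qed

lemma in_S_iff_pair_balanced:
  assumes "x \<notin> leaves V E"
  shows "x \<in> S \<longleftrightarrow> (\<exists>a \<in> \<pi> ` S \<inter> desc E x. \<exists>b \<in> \<sigma> ` S \<inter> desc E x.
           (\<forall>c \<in> children E x. card ((\<pi> ` S - {a}) \<inter> desc E c) = card ((\<sigma> ` S - {b}) \<inter> desc E c)
              \<and> \<not> {a, b} \<subseteq> desc E c))" (is "_ \<longleftrightarrow> ?pair_balanced")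
proof
  show ?pair_balanced if "x \<in> S"
    using pair_witness_if_in_S[OF that] by blast
  show "x \<in> S" if ?pair_balanced
    using that in_S_if_pair_balanced[OF assms] by blast
qed

end

theorem lemma3p5:
  fixes V :: "'a set" and r :: 'a and E :: "('a \<times> 'a) set"
    and S :: "'a set" and \<pi> \<sigma> :: "'a \<Rightarrow> 'a" and x :: 'a
  assumes tree: "rooted_tree V r E"
    and branching: "\<forall>v \<in> V - leaves V E. 2 \<le> card (children E v)"
    and ident: "identifies V E S \<pi> \<sigma>"
    and uniq: "unique_request V E S \<pi> \<sigma>"
    and inner: "x \<in> V - leaves V E"
  defines "A \<equiv> \<pi> ` S" and "B \<equiv> \<sigma> ` S"
  defines "C1 \<equiv> x \<notin> S \<and> \<not> requested E S \<pi> \<sigma> x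
              \<and> (\<forall>c \<in> children E x. card (A \<inter> desc E c) = card (B \<inter> desc E c))"
    and "C2 \<equiv> x \<notin> S \<and> requested E S \<pi> \<sigma> x
              \<and> (\<exists>z \<in> (A \<union> B) \<inter> desc E x. z \<in> leaves V E \<and>
                   (\<forall>c \<in> children E x. card ((A - {z}) \<inter> desc E c) = card ((B - {z}) \<inter> desc E c)))"
    and "C3 \<equiv> x \<in> S \<and> requested E S \<pi> \<sigma> x
              \<and> (\<exists>a \<in> A \<inter> desc E x. \<exists>b \<in> B \<inter> desc E x. a \<in> leaves V E \<and> b \<in> leaves V E \<and>
                   (\<forall>c \<in> children E x. card ((A - {a}) \<inter> desc E c) = card ((B - {b}) \<inter> desc E c)
                      \<and> \<not> {a, b} \<subseteq> desc E c))"
  shows "(C1 \<or> C2 \<or> C3) \<and> \<not> (C1 \<and> C2) \<and> \<not> (C1 \<and> C3) \<and> \<not> (C2 \<and> C3)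
         \<and> (x \<in> S \<longleftrightarrow> (\<exists>a \<in> A \<inter> desc E x. \<exists>b \<in> B \<inter> desc E x.
               (\<forall>c \<in> children E x. card ((A - {a}) \<inter> desc E c) = card ((B - {b}) \<inter> desc E c)
                  \<and> \<not> {a, b} \<subseteq> desc E c)))"
proof -
  interpret identification V r E S \<pi> \<sigma>
    using tree ident uniq by (simp add: identification_def identification_axioms_def tree_def)
  have C3: C3 if "x \<in> S"
    using that pair_witness_if_in_S s_requested_self unfolding C3_def A_def B_def requested_def by blast
  have C2: C2 if "x \<notin> S" "requested E S \<pi> \<sigma> x"
    using that single_witness_if_requested unfolding C2_def A_def B_def by blast
  have C1: C1 if "x \<notin> S" "\<not> requested E S \<pi> \<sigma> x"
    using that balanced_if_not_requested unfolding C1_def A_def B_def by blast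
  have "x \<in> S \<longleftrightarrow> (\<exists>a \<in> A \<inter> desc E x. \<exists>b \<in> B \<inter> desc E x.
          (\<forall>c \<in> children E x. card ((A - {a}) \<inter> desc E c) = card ((B - {b}) \<inter> desc E c)
             \<and> \<not> {a, b} \<subseteq> desc E c))"
    using in_S_iff_pair_balanced inner unfolding A_def B_def by blast
  moreover have "\<not> (C1 \<and> C2) \<and> \<not> (C1 \<and> C3) \<and> \<not> (C2 \<and> C3)"
    unfolding C1_def C2_def C3_def by blast
  ultimately show ?thesis
    using C1 C2 C3 by blast
qed

end
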